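(* Let $q\ge5$, let $\ell$ be an $E_{n\Gamma}$-line and, when $q\not\equiv0\pmod3$, let $\widetilde\ell=\ell\mathfrak A$. Then $\ell=\widetilde\ell\mathfrak A$ and $\Pi_{\overline{1_{\mathcal C}}}(\ell)+2\Pi_{2_{\mathcal C}}(\ell)+3\Pi_{3_{\mathcal C}}(\ell)=q+1$ for all $q$; and, for $q\not\equiv0\pmod3$, $\Pi_{\overline{1_{\mathcal C}}}(\widetilde\ell)+2\Pi_{2_{\mathcal C}}(\widetilde\ell)+3\Pi_{3_{\mathcal C}}(\widetilde\ell)=q+1$, $P_{1_\Gamma}(\ell)+2P_T(\ell)+3P_{3_\Gamma}(\ell)=q+1$, and $P_{1_\Gamma}(\widetilde\ell)+2P_T(\widetilde\ell)+3P_{3_\Gamma}(\widetilde\ell)=q+1$.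
   Context: Let $\mathbb F_q$ be the field of order $q$ and $\mathrm{PG}(3,q)$ the projective space with points $\mathbf P(x_0,x_1,x_2,x_3)$. For $t\in\mathbb F_q$ put $P(t)=\mathbf P(t^3,t^2,t,1)$, and $P(\infty)=\mathbf P(1,0,0,0)$; the twisted cubic is $\mathcal C=\{P(t):t\in\mathbb F_q\cup\{\infty\}\}$. Write $\boldsymbol\pi(c_0,c_1,c_2,c_3)$ for the plane $c_0x_0+c_1x_1+c_2x_2+c_3x_3=0$. The osculating plane at $P(t)$ is $\boldsymbol\pi(1,-3t,3t^2,-t^3)$ ($t\in\mathbb F_q$) and $\boldsymbol\pi(0,0,0,1)$ at $P(\infty)$; these are the $\Gamma$-planes. The tangent at $P(t)$, $t\in\mathbb F_q$, is the line through $P(t)$ and $\mathbf P(3t^2,2t,1,0)$; at $P(\infty)$ it is the line through $\mathbf P(1,0,0,0),\mathbf P(0,1,0,0)$. A real chord joins two distinct points of $\mathcal C$; an imaginary chord joins $P(\tau),P(\tau^q)$, $\tau\in\mathbb F_{q^2}\setminus\mathbb F_q$; chords are real chords, tangents and imaginary chords. An axis is the intersection of two distinct osculating planes at points of $\mathcal C$, or of the osculating planes at conjugate points $P(\tau),P(\tau^q)$. An $E_{n\Gamma}$-line is a line with no point of $\mathcal C$, not contained in a $\Gamma$-plane, which is neither a chord nor an axis. For $q\not\equiv 0\pmod 3$, the null polarity $\mathfrak A$ maps the point $\mathbf P(x_0,x_1,x_2,x_3)$ to the plane $\boldsymbol\pi(x_3,-3x_2,3x_1,-x_0)$, and for a line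 $\ell=\overline{P_1P_2}$ one sets $\ell\mathfrak A=P_1\mathfrak A\cap P_2\mathfrak A$ (a line), and dually a line which is the intersection of two planes is mapped to the line joining their images. Plane types: a $d_{\mathcal C}$-plane ($d\in\{2,3\}$) contains exactly $d$ points of $\mathcal C$; a $\overline{1_{\mathcal C}}$-plane is a non-$\Gamma$-plane containing exactly one point of $\mathcal C$. Point types for $q\not\equiv0\pmod3$: $T$-points: points off $\mathcal C$ on a tangent; $\mu_\Gamma$-points ($\mu\in\{1,3\}$): points off $\mathcal C$ lying in exactly $\mu$ distinct $\Gamma$-planes. For a line $m$, $\Pi_\pi(m)$ denotes the number of $\pi$-planes through $m$ and $P_{\mathfrak p}(m)$ the number of $\mathfrak p$-points on $m$. *)

theory Defs
  imports Main
begin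

type_synonym 'a v4 = "'a \<times> 'a \<times> 'a \<times> 'a"

definition zero4 :: "'a::field v4" where
  "zero4 = (0, 0, 0, 0)"

definition smul :: "'a::field \<Rightarrow> 'a v4 \<Rightarrow> 'a v4" where
  "smul k v = (case v of (a, b, c, d) \<Rightarrow> (k * a, k * b, k * c, k * d))"

definition vadd :: "'a::field v4 \<Rightarrow> 'a v4 \<Rightarrow> 'a v4" where
  "vadd v w = (case v of (a, b, c, d) \<Rightarrow> case w of (a', b', c', d') \<Rightarrow>
                 (a + a', b + b', c + c', d + d'))"

definition dot :: "'a::field v4 \<Rightarrow> 'a v4 \<Rightarrow> 'a" where
  "dot c v = (case c of (c0, c1, c2, c3) \<Rightarrow> case v of (x0, x1, x2, x3) \<Rightarrow>
                 c0 * x0 + c1 * x1 + c2 * x2 + c3 * x3)"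

text \<open>A point is the class of nonzero multiples of a nonzero vector; lines and planes
  are sets of points.\<close>

definition pt :: "'a::field v4 \<Rightarrow> 'a v4 set" where
  "pt v = {w. \<exists>k. k \<noteq> 0 \<and> w = smul k v}"

definition Points :: "'a::field v4 set set" where
  "Points = {pt v | v. v \<noteq> zero4}"

definition planeset :: "'a::field v4 \<Rightarrow> 'a v4 set set" where
  "planeset c = {pt v | v. v \<noteq> zero4 \<and> dot c v = 0}"

definition Planes :: "'a::field v4 set set set" where
  "Planes = {planeset c | c. c \<noteq> zero4}"

definition indep :: "'a::field v4 \<Rightarrow> 'a v4 \<Rightarrow> bool" where
  "indep u v = (\<forall>a b. vadd (smul a u) (smul b v) = zero4 \<longrightarrow> a = 0 \<and> b = 0)"

definition lineset :: "'a::field v4 \<Rightarrow> 'a v4 \<Rightarrow> 'a v4 set set" where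
  "lineset u v = {pt (vadd (smul a u) (smul b v)) | a b. vadd (smul a u) (smul b v) \<noteq> zero4}"

definition Lines :: "'a::field v4 set set set" where
  "Lines = {lineset u v | u v. indep u v}"

section \<open>The twisted cubic; parameter None stands for \<infinity>\<close>

definition cvec :: "'a::field option \<Rightarrow> 'a v4" where
  "cvec s = (case s of None \<Rightarrow> (1, 0, 0, 0) | Some t \<Rightarrow> (t ^ 3, t ^ 2, t, 1))"

definition cpt :: "'a::field option \<Rightarrow> 'a v4 set" where
  "cpt s = pt (cvec s)"

definition Curve :: "'a::field v4 set set" where
  "Curve = range cpt"

definition oscp :: "'a::field option \<Rightarrow> 'a v4 set set" where
  "oscp s = (case s of None \<Rightarrow> planeset (0, 0, 0, 1)
                     | Some t \<Rightarrow> planeset (1, - 3 * t, 3 * t ^ 2, - (t ^ 3)))"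

definition GammaPlanes :: "'a::field v4 set set set" where
  "GammaPlanes = range oscp"

definition tanp :: "'a::field option \<Rightarrow> 'a v4 set set" where
  "tanp s = (case s of None \<Rightarrow> lineset (1, 0, 0, 0) (0, 1, 0, 0)
                     | Some t \<Rightarrow> lineset (t ^ 3, t ^ 2, t, 1) (3 * t ^ 2, 2 * t, 1, 0))"

definition Tangents :: "'a::field v4 set set set" where
  "Tangents = range tanp"

definition RealChords :: "'a::field v4 set set set" where
  "RealChords = {l \<in> Lines. \<exists>P Q. P \<in> Curve \<and> Q \<in> Curve \<and> P \<noteq> Q \<and> P \<in> l \<and> Q \<in> l}"

definition RealAxes :: "'a::field v4 set set set" where
  "RealAxes = {oscp s \<inter> oscp t | s t. s \<noteq> t}"

section \<open>The quadratic extension F_{q^2} (given by a field embedding emb of F_q into it)\<close>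

definition is_field_emb :: "('a::field \<Rightarrow> 'b::field) \<Rightarrow> bool" where
  "is_field_emb emb = ((\<forall>x y. emb (x + y) = emb x + emb y) \<and>
                       (\<forall>x y. emb (x * y) = emb x * emb y) \<and> emb 1 = 1)"

definition embv :: "('a::field \<Rightarrow> 'b::field) \<Rightarrow> 'a v4 \<Rightarrow> 'b v4" where
  "embv emb v = (case v of (a, b, c, d) \<Rightarrow> (emb a, emb b, emb c, emb d))"

definition ratpts :: "('a::field \<Rightarrow> 'b::field) \<Rightarrow> 'b v4 set \<Rightarrow> 'a v4 set set" where
  "ratpts emb S = {pt v | v. v \<noteq> zero4 \<and> embv emb v \<in> S}"

definition kspan :: "'b::field v4 \<Rightarrow> 'b v4 \<Rightarrow> 'b v4 set" where
  "kspan u w = {vadd (smul a u) (smul b w) | a b. True}"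

text \<open>Imaginary chord: the line joining P(\<tau>), P(\<tau>^q), \<tau> \<in> F_{q^2} \<setminus> F_q.\<close>
definition ImagChords :: "('a::{field,finite} \<Rightarrow> 'b::field) \<Rightarrow> 'a v4 set set set" where
  "ImagChords emb = {ratpts emb (kspan (cvec (Some \<tau>)) (cvec (Some (\<tau> ^ card (UNIV :: 'a set))))) | \<tau>.
                        \<tau> \<notin> range emb}"

definition oscvec :: "'b::field \<Rightarrow> 'b v4" where
  "oscvec t = (1, - 3 * t, 3 * t ^ 2, - (t ^ 3))"

text \<open>Imaginary axis: intersection of the osculating planes at P(\<tau>), P(\<tau>^q).\<close>
definition ImagAxes :: "('a::{field,finite} \<Rightarrow> 'b::field) \<Rightarrow> 'a v4 set set set" where
  "ImagAxes emb = {ratpts emb {w. dot (oscvec \<tau>) w = 0 \<and> dot (oscvec (\<tau> ^ card (UNIV :: 'a set))) w = 0} | \<tau>.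
                        \<tau> \<notin> range emb}"

definition Chords :: "('a::{field,finite} \<Rightarrow> 'b::field) \<Rightarrow> 'a v4 set set set" where
  "Chords emb = RealChords \<union> Tangents \<union> ImagChords emb"

definition Axes :: "('a::{field,finite} \<Rightarrow> 'b::field) \<Rightarrow> 'a v4 set set set" where
  "Axes emb = RealAxes \<union> ImagAxes emb"

definition EnGammaLines :: "('a::{field,finite} \<Rightarrow> 'b::field) \<Rightarrow> 'a v4 set set set" where
  "EnGammaLines emb = {l \<in> Lines. l \<inter> Curve = {} \<and> (\<forall>\<pi>\<in>GammaPlanes. \<not> l \<subseteq> \<pi>)
                         \<and> l \<notin> Chords emb \<and> l \<notin> Axes emb}"

section \<open>Null polarity (used for q not divisible by 3)\<close>

definition polarv :: "'a::field v4 \<Rightarrow> 'a v4 set set" where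
  "polarv v = (case v of (x0, x1, x2, x3) \<Rightarrow> planeset (x3, - 3 * x2, 3 * x1, - x0))"

definition polar_line :: "'a::field v4 set set \<Rightarrow> 'a v4 set set" where
  "polar_line l = (SOME m. \<exists>u w. u \<noteq> zero4 \<and> w \<noteq> zero4 \<and> pt u \<in> l \<and> pt w \<in> l \<and>
                                 pt u \<noteq> pt w \<and> m = polarv u \<inter> polarv w)"

definition dC_planes :: "nat \<Rightarrow> 'a::field v4 set set set" where
  "dC_planes d = {\<pi> \<in> Planes. card (\<pi> \<inter> Curve) = d}"

definition oneC_bar_planes :: "'a::field v4 set set set" where
  "oneC_bar_planes = {\<pi> \<in> Planes. \<pi> \<notin> GammaPlanes \<and> card (\<pi> \<inter> Curve) = 1}"

definition T_points :: "'a::field v4 set set" where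
  "T_points = {P \<in> Points. P \<notin> Curve \<and> (\<exists>s. P \<in> tanp s)}"

definition muGamma_points :: "nat \<Rightarrow> 'a::field v4 set set" where
  "muGamma_points \<mu> = {P \<in> Points. P \<notin> Curve \<and> card {\<pi> \<in> GammaPlanes. P \<in> \<pi>} = \<mu>}"

definition PiN :: "'a::field v4 set set set \<Rightarrow> 'a v4 set set \<Rightarrow> nat" where
  "PiN X m = card {\<pi> \<in> X. m \<subseteq> \<pi>}"

definition PN :: "'a::field v4 set set \<Rightarrow> 'a v4 set set \<Rightarrow> nat" where
  "PN X m = card {P \<in> X. P \<in> m}"

end

theory Submission
  imports Defs "HOL-Computational_Algebra.Polynomial" "HOL-Library.Cardinality" "HOL-Number_Theory.Residues"
begin

(* Both identities are double countings of incidences. A plane meets the cubic in at most three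
   points (the roots of a binary cubic form), and since l misses the cubic, each of its q + 1 points
   lies on exactly one plane through l; summing over the planes through l gives the first identity.
   Dually, l lies in no osculating plane, so each of the q + 1 osculating planes meets l in exactly one
   point, and a point off the cubic lies in at most three osculating planes. These planes correspond
   to the roots of the cubic form given by the polar plane of the point, and there are exactly two
   of them iff one root is double, i.e. iff the point lies on a tangent. Finally, P(t) lies on the
   polar line of l iff l lies in the osculating plane at P(t); so for 3 not dividing q the null
   polarity is an involution on lines which swaps "l misses the cubic" and "l lies in no
   osculating plane", and the counts apply to the polar line as well. *)

lemmas v4_defs = zero4_def smul_def vadd_def dot_def

lemma smul_smul: "smul a (smul b v) = smul (a * b) (v::'a::field v4)"
  by (cases v rule: prod_cases4) (simp add: v4_defs)

lemma smul_one [simp]: "smul 1 v = (v::'a::field v4)"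
  by (cases v rule: prod_cases4) (simp add: v4_defs)

lemma smul_zero_left [simp]: "smul 0 v = (zero4::'a::field v4)"
  by (cases v rule: prod_cases4) (simp add: v4_defs)

lemma smul_eq_zero4_iff: "smul k v = zero4 \<longleftrightarrow> k = 0 \<or> v = (zero4::'a::field v4)"
  by (cases v rule: prod_cases4) (auto simp: v4_defs)

lemma dot_commute: "dot c v = dot v (c::'a::field v4)"
  by (cases v rule: prod_cases4; cases c rule: prod_cases4) (simp add: v4_defs algebra_simps)

lemma dot_smul_left: "dot (smul k c) v = k * dot c (v::'a::field v4)"
  by (cases v rule: prod_cases4; cases c rule: prod_cases4) (simp add: v4_defs algebra_simps)

lemma dot_smul_right: "dot c (smul k v) = k * dot c (v::'a::field v4)"
  using dot_commute dot_smul_left by metis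

lemma dot_lincomb: "dot c (vadd (smul a u) (smul b v)) = a * dot c u + b * dot c (v::'a::field v4)"
  by (cases v rule: prod_cases4; cases c rule: prod_cases4; cases u rule: prod_cases4)
    (simp add: v4_defs algebra_simps)

lemma eq_smul_if_lincomb_eq_zero4:
  assumes "vadd (smul a u) (smul b v) = zero4" "a \<noteq> 0"
  shows "u = smul (- b / a) (v::'a::field v4)"
  using assms by (cases v rule: prod_cases4; cases u rule: prod_cases4)
    (auto simp: v4_defs field_simps add_eq_0_iff2)

lemma pt_smul:
  assumes "k \<noteq> 0"
  shows "pt (smul k v) = pt (v::'a::field v4)"
proof -
  have "\<exists>i. i \<noteq> 0 \<and> smul j v = smul i (smul k v)" if "j \<noteq> 0" for j
    using assms that by (intro exI[of _ "j / k"]) (simp add: smul_smul)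
  then show ?thesis
    using assms unfolding pt_def by (auto simp: smul_smul) (metis mult_eq_0_iff)
qed

lemma pt_eq_iff: "pt v = pt w \<longleftrightarrow> (\<exists>k. k \<noteq> 0 \<and> w = smul k (v::'a::field v4))"
proof
  assume "pt v = pt w"
  moreover have "w \<in> pt w"
    unfolding pt_def by (auto intro: exI[of _ 1])
  ultimately show "\<exists>k. k \<noteq> 0 \<and> w = smul k v"
    by (auto simp: pt_def)
qed (auto simp: pt_smul)

lemma planeset_mem:
  assumes "x \<noteq> zero4"
  shows "pt x \<in> planeset c \<longleftrightarrow> dot c (x::'a::field v4) = 0"
proof
  show "dot c x = 0 \<Longrightarrow> pt x \<in> planeset c"
    using assms unfolding planeset_def by blast
qed (auto simp: planeset_def pt_eq_iff dot_smul_right)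

lemma planeset_smul: "k \<noteq> 0 \<Longrightarrow> planeset (smul k c) = planeset (c::'a::field v4)"
  unfolding planeset_def by (simp add: dot_smul_left)

lemma kspan_smul:
  assumes "x \<in> kspan u v"
  shows "smul k x \<in> kspan u (v::'a::field v4)"
proof -
  obtain a b where "x = vadd (smul a u) (smul b v)"
    using assms unfolding kspan_def by blast
  then have "smul k x = vadd (smul (k * a) u) (smul (k * b) v)"
    by (cases u rule: prod_cases4; cases v rule: prod_cases4) (simp add: v4_defs algebra_simps)
  then show ?thesis
    unfolding kspan_def by blast
qed

lemma kspan_left: "u \<in> kspan u (v::'a::field v4)"
proof -
  have "u = vadd (smul 1 u) (smul 0 v)"
    by (cases u rule: prod_cases4; cases v rule: prod_cases4) (simp add: v4_defs)
  then show ?thesis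
    unfolding kspan_def by blast
qed

lemma kspan_right: "v \<in> kspan u (v::'a::field v4)"
proof -
  have "v = vadd (smul 0 u) (smul 1 v)"
    by (cases u rule: prod_cases4; cases v rule: prod_cases4) (simp add: v4_defs)
  then show ?thesis
    unfolding kspan_def by blast
qed

lemma kspan_subset:
  assumes "x \<in> kspan u v" "y \<in> kspan u (v::'a::field v4)"
  shows "kspan x y \<subseteq> kspan u v"
proof
  fix z assume "z \<in> kspan x y"
  then obtain a b where z: "z = vadd (smul a x) (smul b y)"
    unfolding kspan_def by blast
  obtain a1 b1 a2 b2 where "x = vadd (smul a1 u) (smul b1 v)" "y = vadd (smul a2 u) (smul b2 v)"
    using assms unfolding kspan_def by blast
  then have "z = vadd (smul (a * a1 + b * a2) u) (smul (a * b1 + b * b2) v)"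
    unfolding z by (cases u rule: prod_cases4; cases v rule: prod_cases4) (simp add: v4_defs algebra_simps)
  then show "z \<in> kspan u v"
    unfolding kspan_def by blast
qed

lemma indep_nonzero:
  assumes "indep u v"
  shows "u \<noteq> zero4 \<and> v \<noteq> (zero4::'a::field v4)"
proof (intro conjI notI)
  assume "u = zero4"
  then have "vadd (smul 1 u) (smul 0 v) = zero4"
    by (cases v rule: prod_cases4) (simp add: v4_defs)
  then have "(1::'a) = 0"
    using assms unfolding indep_def by blast
  then show False
    by simp
next
  assume "v = zero4"
  then have "vadd (smul 0 u) (smul 1 v) = zero4"
    by (cases u rule: prod_cases4) (simp add: v4_defs)
  then have "(1::'a) = 0"
    using assms unfolding indep_def by blast
  then show False
    by simp
qed

lemma lincomb_neq_zero4: "indep u v \<Longrightarrow> a \<noteq> 0 \<or> b \<noteq> 0 \<Longrightarrow> vadd (smul a u) (smul b v) \<noteq> zero4"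
  unfolding indep_def by blast

lemma indep_iff_pt_neq:
  assumes "u \<noteq> zero4" "v \<noteq> (zero4::'a::field v4)"
  shows "indep u v \<longleftrightarrow> pt u \<noteq> pt v"
proof
  assume "indep u v"
  show "pt u \<noteq> pt v"
  proof
    assume "pt u = pt v"
    then obtain k where "v = smul k u"
      using pt_eq_iff by metis
    then have "vadd (smul k u) (smul (- 1) v) = zero4"
      by (cases u rule: prod_cases4) (simp add: v4_defs)
    then have "(- 1::'a) = 0"
      using \<open>indep u v\<close> unfolding indep_def by blast
    then show False
      by simp
  qed
next
  assume ne: "pt u \<noteq> pt v"
  show "indep u v"
    unfolding indep_def
  proof (intro allI impI)
    fix a b assume comb: "vadd (smul a u) (smul b v) = zero4"
    have "a = 0"
    proof (rule ccontr)
      assume "a \<noteq> 0"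
      have u: "u = smul (- b / a) v"
        using comb \<open>a \<noteq> 0\<close> by (rule eq_smul_if_lincomb_eq_zero4)
      then have "- b / a \<noteq> 0"
        using assms(1) by (auto simp: smul_eq_zero4_iff)
      then show False
        using ne u pt_smul by metis
    qed
    then show "a = 0 \<and> b = 0"
      using comb assms(2) by (cases u rule: prod_cases4; cases v rule: prod_cases4) (auto simp: v4_defs)
  qed
qed

lemma kspan_eq:
  fixes u v u' v' :: "'a::field v4"
  assumes "indep u' v'" "u' \<in> kspan u v" "v' \<in> kspan u v"
  shows "kspan u' v' = kspan u v"
proof
  show "kspan u' v' \<subseteq> kspan u v"
    using kspan_subset assms(2,3) .
next
  obtain a b c d where u': "u' = vadd (smul a u) (smul b v)" and v': "v' = vadd (smul c u) (smul d v)"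
    using assms(2,3) unfolding kspan_def by blast
  let ?D = "a * d - b * c"
  have comb_u: "smul ?D u = vadd (smul d u') (smul (- b) v')"
    and comb_v: "smul ?D v = vadd (smul (- c) u') (smul a v')"
    unfolding u' v' by (cases u rule: prod_cases4; cases v rule: prod_cases4; simp add: v4_defs algebra_simps)+
  have "?D \<noteq> 0"
  proof
    assume "?D = 0"
    then have "vadd (smul d u') (smul (- b) v') = zero4" "vadd (smul (- c) u') (smul a v') = zero4"
      using comb_u comb_v by simp_all
    then have "a = 0 \<and> b = 0"
      using assms(1) unfolding indep_def by (metis neg_equal_0_iff_equal)
    then have "u' = zero4"
      unfolding u' by (cases u rule: prod_cases4; cases v rule: prod_cases4) (simp add: v4_defs)
    then show False
      using indep_nonzero[OF assms(1)] by simp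
  qed
  have "smul ?D u \<in> kspan u' v'" "smul ?D v \<in> kspan u' v'"
    unfolding comb_u comb_v kspan_def by blast+
  then have "smul (1 / ?D) (smul ?D u) \<in> kspan u' v'" "smul (1 / ?D) (smul ?D v) \<in> kspan u' v'"
    using kspan_smul by blast+
  then have "u \<in> kspan u' v'" "v \<in> kspan u' v'"
    using \<open>?D \<noteq> 0\<close> by (simp_all add: smul_smul)
  then show "kspan u v \<subseteq> kspan u' v'"
    by (rule kspan_subset)
qed

lemma lineset_eq: "lineset u v = {pt x | x. x \<noteq> zero4 \<and> x \<in> kspan u v}"
  unfolding lineset_def kspan_def by blast

lemma lineset_elem: "P \<in> lineset u v \<Longrightarrow> \<exists>x. x \<noteq> zero4 \<and> P = pt x \<and> x \<in> kspan u v"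
  unfolding lineset_def kspan_def by blast

lemma lineset_mem:
  assumes "x \<noteq> zero4"
  shows "pt x \<in> lineset u v \<longleftrightarrow> x \<in> kspan u (v::'a::field v4)"
proof
  assume "pt x \<in> lineset u v"
  then obtain y where "pt y = pt x" "y \<in> kspan u v"
    unfolding lineset_eq by blast
  then obtain k where "x = smul k y"
    using pt_eq_iff by metis
  then show "x \<in> kspan u v"
    using kspan_smul \<open>y \<in> kspan u v\<close> by blast
qed (use assms in \<open>unfold lineset_eq, blast\<close>)

definition joint_kernel :: "'a::field v4 \<Rightarrow> 'a v4 \<Rightarrow> 'a v4 set" where
  "joint_kernel c d = {x. dot c x = 0 \<and> dot d x = 0}"

lemma joint_kernel_eq_kspan_if_minor01:
  fixes c0 c1 c2 c3 d0 d1 d2 d3 :: "'a::field"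
  assumes p: "c0 * d1 - c1 * d0 \<noteq> 0"
  shows "\<exists>u v. indep u v \<and> joint_kernel (c0, c1, c2, c3) (d0, d1, d2, d3) = kspan u v"
proof -
  define p where "p = c0 * d1 - c1 * d0"
  \<comment> \<open>Cramer's rule for the coordinates \<open>x0, x1\<close>, with \<open>x2, x3\<close> as free parameters\<close>
  define u :: "'a v4" where "u = (c1 * d2 - c2 * d1, c2 * d0 - c0 * d2, p, 0)"
  define v :: "'a v4" where "v = (c1 * d3 - c3 * d1, c3 * d0 - c0 * d3, 0, p)"
  have "p \<noteq> 0"
    using assms by (simp add: p_def)
  then have "indep u v"
    unfolding indep_def u_def v_def by (simp add: v4_defs)
  moreover have "kspan u v \<subseteq> joint_kernel (c0, c1, c2, c3) (d0, d1, d2, d3)"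
    unfolding kspan_def joint_kernel_def u_def v_def p_def by (auto simp: v4_defs algebra_simps)
  moreover have "joint_kernel (c0, c1, c2, c3) (d0, d1, d2, d3) \<subseteq> kspan u v"
  proof
    fix z assume "z \<in> joint_kernel (c0, c1, c2, c3) (d0, d1, d2, d3)"
    moreover obtain z0 z1 z2 z3 where z: "z = (z0, z1, z2, z3)"
      by (rule prod_cases4)
    ultimately have "c0 * z0 + c1 * z1 + c2 * z2 + c3 * z3 = 0" "d0 * z0 + d1 * z1 + d2 * z2 + d3 * z3 = 0"
      by (simp_all add: joint_kernel_def v4_defs)
    then have "p * z0 = z2 * (c1 * d2 - c2 * d1) + z3 * (c1 * d3 - c3 * d1)"
      "p * z1 = z2 * (c2 * d0 - c0 * d2) + z3 * (c3 * d0 - c0 * d3)"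
      \<comment> \<open>HOL-Algebra, imported through Residues, rebinds the method name \<open>algebra\<close>\<close>
      unfolding p_def by Groebner_Basis.algebra+
    then have "smul p z = vadd (smul z2 u) (smul z3 v)"
      unfolding z u_def v_def by (simp add: v4_defs mult.commute)
    then have "smul p z \<in> kspan u v"
      unfolding kspan_def by blast
    then have "smul (1 / p) (smul p z) \<in> kspan u v"
      by (rule kspan_smul)
    then show "z \<in> kspan u v"
      using \<open>p \<noteq> 0\<close> by (simp add: smul_smul)
  qed
  ultimately show ?thesis
    by blast
qed

lemma joint_kernel_eq_kspan_transport:
  fixes \<sigma> :: "'a::field v4 \<Rightarrow> 'a v4"
  assumes invol: "\<And>x. \<sigma> (\<sigma> x) = x"
    and dot: "\<And>c x. dot (\<sigma> c) (\<sigma> x) = dot c x"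
    and lin: "\<And>a b u v. \<sigma> (vadd (smul a u) (smul b v)) = vadd (smul a (\<sigma> u)) (smul b (\<sigma> v))"
    and zero: "\<sigma> zero4 = zero4"
    and "\<exists>u v. indep u v \<and> joint_kernel (\<sigma> c) (\<sigma> d) = kspan u v"
  shows "\<exists>u v. indep u v \<and> joint_kernel c d = kspan u v"
proof -
  obtain u v where uv: "indep u v" "joint_kernel (\<sigma> c) (\<sigma> d) = kspan u v"
    using assms(5) by blast
  have "indep (\<sigma> u) (\<sigma> v)"
    unfolding indep_def
  proof (intro allI impI)
    fix a b assume "vadd (smul a (\<sigma> u)) (smul b (\<sigma> v)) = zero4"
    then have "\<sigma> (\<sigma> (vadd (smul a u) (smul b v))) = \<sigma> zero4"
      by (simp add: lin zero)
    then have "vadd (smul a u) (smul b v) = zero4"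
      by (simp add: invol zero)
    then show "a = 0 \<and> b = 0"
      using uv(1) unfolding indep_def by blast
  qed
  moreover have "x \<in> joint_kernel c d \<longleftrightarrow> x \<in> kspan (\<sigma> u) (\<sigma> v)" for x
  proof -
    have "x \<in> joint_kernel c d \<longleftrightarrow> \<sigma> x \<in> joint_kernel (\<sigma> c) (\<sigma> d)"
      by (simp add: joint_kernel_def dot)
    also have "\<dots> \<longleftrightarrow> (\<exists>a b. \<sigma> x = vadd (smul a u) (smul b v))"
      using uv(2) by (simp add: kspan_def)
    also have "\<dots> \<longleftrightarrow> (\<exists>a b. x = vadd (smul a (\<sigma> u)) (smul b (\<sigma> v)))"
      by (metis invol lin)
    finally show ?thesis
      by (simp add: kspan_def)
  qed
  ultimately show ?thesis
    by blast
qed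

lemma indep_some_minor_nonzero:
  fixes c0 c1 c2 c3 d0 d1 d2 d3 :: "'a::field"
  assumes "indep (c0, c1, c2, c3) (d0, d1, d2, d3)"
  shows "c0 * d1 - c1 * d0 \<noteq> 0 \<or> c0 * d2 - c2 * d0 \<noteq> 0 \<or> c0 * d3 - c3 * d0 \<noteq> 0 \<or>
    c1 * d2 - c2 * d1 \<noteq> 0 \<or> c1 * d3 - c3 * d1 \<noteq> 0 \<or> c2 * d3 - c3 * d2 \<noteq> 0"
proof (rule ccontr)
  assume minors: "\<not> ?thesis"
  have d_coeff: "b = 0" if "vadd (smul a (c0, c1, c2, c3)) (smul b (d0, d1, d2, d3)) = zero4" for a b
    using assms that unfolding indep_def by blast
  have "(c0, c1, c2, c3) \<noteq> zero4"
    using indep_nonzero[OF assms] by blast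
  then consider "c0 \<noteq> 0" | "c1 \<noteq> 0" | "c2 \<noteq> 0" | "c3 \<noteq> 0"
    by (auto simp: v4_defs)
  then show False
  proof cases
    case 1
    then show False
      using d_coeff[of d0 "- c0"] minors by (simp add: v4_defs algebra_simps)
  next
    case 2
    then show False
      using d_coeff[of d1 "- c1"] minors by (simp add: v4_defs algebra_simps)
  next
    case 3
    then show False
      using d_coeff[of d2 "- c2"] minors by (simp add: v4_defs algebra_simps)
  next
    case 4
    then show False
      using d_coeff[of d3 "- c3"] minors by (simp add: v4_defs algebra_simps)
  qed
qed

lemma joint_kernel_eq_kspan:
  fixes c d :: "'a::field v4"
  assumes "indep c d"
  shows "\<exists>u v. indep u v \<and> joint_kernel c d = kspan u v"
proof -
  obtain c0 c1 c2 c3 d0 d1 d2 d3 where c: "c = (c0, c1, c2, c3)" and d: "d = (d0, d1, d2, d3)"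
    by (metis prod_cases4)
  \<comment> \<open>an involutive swap of coordinates moves the nonzero minor to the columns 0 and 1\<close>
  note transport = joint_kernel_eq_kspan_transport[of _ c d]
  from indep_some_minor_nonzero[OF assms[unfolded c d]] show ?thesis
  proof (elim disjE)
    assume "c0 * d1 - c1 * d0 \<noteq> 0"
    then show ?thesis
      unfolding c d by (rule joint_kernel_eq_kspan_if_minor01)
  next
    assume "c0 * d2 - c2 * d0 \<noteq> 0"
    then show ?thesis
      using joint_kernel_eq_kspan_if_minor01[of c0 d2 c2 d0 c1 c3 d1 d3]
      by (intro transport[of "\<lambda>(a, b, c, d). (a, c, b, d)"]) (auto simp: c d v4_defs)
  next
    assume "c0 * d3 - c3 * d0 \<noteq> 0"
    then show ?thesis
      using joint_kernel_eq_kspan_if_minor01[of c0 d3 c3 d0 c2 c1 d2 d1]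
      by (intro transport[of "\<lambda>(a, b, c, d). (a, d, c, b)"]) (auto simp: c d v4_defs)
  next
    assume "c1 * d2 - c2 * d1 \<noteq> 0"
    then have "c2 * d1 - c1 * d2 \<noteq> 0"
      by (simp add: right_minus_eq)
    then show ?thesis
      using joint_kernel_eq_kspan_if_minor01[of c2 d1 c1 d2 c0 c3 d0 d3]
      by (intro transport[of "\<lambda>(a, b, c, d). (c, b, a, d)"]) (auto simp: c d v4_defs)
  next
    assume "c1 * d3 - c3 * d1 \<noteq> 0"
    then have "c3 * d1 - c1 * d3 \<noteq> 0"
      by (simp add: right_minus_eq)
    then show ?thesis
      using joint_kernel_eq_kspan_if_minor01[of c3 d1 c1 d3 c2 c0 d2 d0]
      by (intro transport[of "\<lambda>(a, b, c, d). (d, b, c, a)"]) (auto simp: c d v4_defs)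
  next
    assume "c2 * d3 - c3 * d2 \<noteq> 0"
    then show ?thesis
      using joint_kernel_eq_kspan_if_minor01[of c2 d3 c3 d2 c0 c1 d0 d1]
      by (intro transport[of "\<lambda>(a, b, c, d). (c, d, a, b)"]) (auto simp: c d v4_defs)
  qed
qed

lemma joint_kernel_eq_kspan_if_mem:
  fixes c d u v :: "'a::field v4"
  assumes "indep c d" "indep u v" "u \<in> joint_kernel c d" "v \<in> joint_kernel c d"
  shows "joint_kernel c d = kspan u v"
proof -
  obtain u' v' where "indep u' v'" "joint_kernel c d = kspan u' v'"
    using joint_kernel_eq_kspan[OF assms(1)] by blast
  then show ?thesis
    using kspan_eq[of u v u' v'] assms(2-4) by simp
qed

lemma lineset_subset_planeset_iff:
  assumes "indep u v"
  shows "lineset u v \<subseteq> planeset c \<longleftrightarrow> dot c u = 0 \<and> dot c (v::'a::field v4) = 0"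
proof
  assume "lineset u v \<subseteq> planeset c"
  moreover have "pt u \<in> lineset u v" "pt v \<in> lineset u v"
    using lineset_mem indep_nonzero[OF assms] kspan_left kspan_right by blast+
  ultimately show "dot c u = 0 \<and> dot c v = 0"
    using planeset_mem indep_nonzero[OF assms] by blast
next
  assume "dot c u = 0 \<and> dot c v = 0"
  then have "dot c x = 0" if "x \<in> kspan u v" for x
    using that unfolding kspan_def by (auto simp: dot_lincomb)
  then show "lineset u v \<subseteq> planeset c"
    unfolding lineset_eq using planeset_mem by blast
qed

lemma lincomb_proportional:
  fixes u v :: "'a::field v4"
  assumes "a * A + b * B = 0" "A \<noteq> 0 \<or> B \<noteq> 0"
  shows "\<exists>k. vadd (smul a u) (smul b v) = smul k (vadd (smul B u) (smul (- A) v))"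
proof (cases "B = 0")
  case True
  then have "a = 0" "A \<noteq> 0"
    using assms by auto
  then show ?thesis
    using True by (intro exI[of _ "- b / A"]) (cases u rule: prod_cases4; cases v rule: prod_cases4; simp add: v4_defs)
next
  case False
  then have "b = - a * A / B"
    using assms(1) by (simp add: field_simps add_eq_0_iff2)
  then show ?thesis
    using False by (intro exI[of _ "a / B"]) (cases u rule: prod_cases4; cases v rule: prod_cases4; simp add: v4_defs field_simps)
qed

lemma pt_smul_if_nonzero: "smul k x \<noteq> zero4 \<Longrightarrow> pt (smul k x) = pt (x::'a::field v4)"
  by (simp add: smul_eq_zero4_iff pt_smul)

lemma planeset_smul_if_nonzero: "smul k c \<noteq> zero4 \<Longrightarrow> planeset (smul k c) = planeset (c::'a::field v4)"
  by (simp add: smul_eq_zero4_iff planeset_smul)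

lemma ex1_plane_through_line_and_point:
  fixes u v w :: "'a::field v4"
  assumes uv: "indep u v" and w: "w \<noteq> zero4" "w \<notin> kspan u v"
  shows "\<exists>!\<pi>. \<pi> \<in> Planes \<and> lineset u v \<subseteq> \<pi> \<and> pt w \<in> \<pi>"
proof -
  obtain c1 c2 where c: "indep c1 c2" "joint_kernel u v = kspan c1 c2"
    using joint_kernel_eq_kspan[OF uv] by blast
  have "c1 \<in> joint_kernel u v" "c2 \<in> joint_kernel u v"
    using c(2) kspan_left kspan_right by blast+
  then have "u \<in> joint_kernel c1 c2" "v \<in> joint_kernel c1 c2"
    by (simp_all add: joint_kernel_def dot_commute)
  then have "w \<notin> joint_kernel c1 c2"
    using joint_kernel_eq_kspan_if_mem[OF c(1) uv] w(2) by simp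
  define A where "A = dot c1 w"
  define B where "B = dot c2 w"
  have AB: "A \<noteq> 0 \<or> B \<noteq> 0"
    using \<open>w \<notin> joint_kernel c1 c2\<close> by (simp add: A_def B_def joint_kernel_def)
  define c where "c = vadd (smul B c1) (smul (- A) c2)"
  have "c \<noteq> zero4"
    unfolding c_def using AB by (intro lincomb_neq_zero4[OF c(1)]) auto
  moreover have "dot c x = B * dot c1 x - A * dot c2 x" for x
    unfolding c_def by (simp add: dot_commute[of _ x] dot_lincomb)
  then have "dot c u = 0" "dot c v = 0" "dot c w = 0"
    using \<open>u \<in> joint_kernel c1 c2\<close> \<open>v \<in> joint_kernel c1 c2\<close>
    by (simp_all add: joint_kernel_def A_def B_def)
  ultimately have "planeset c \<in> Planes \<and> lineset u v \<subseteq> planeset c \<and> pt w \<in> planeset c"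
    using lineset_subset_planeset_iff[OF uv] planeset_mem[OF w(1)] unfolding Planes_def by blast
  moreover have "\<pi> = planeset c" if \<pi>: "\<pi> \<in> Planes" "lineset u v \<subseteq> \<pi>" "pt w \<in> \<pi>" for \<pi>
  proof -
    obtain c' where c': "c' \<noteq> zero4" "\<pi> = planeset c'"
      using \<pi>(1) unfolding Planes_def by blast
    then have "c' \<in> joint_kernel u v"
      using \<pi>(2) lineset_subset_planeset_iff[OF uv] by (simp add: joint_kernel_def dot_commute)
    then obtain a b where ab: "c' = vadd (smul a c1) (smul b c2)"
      using c(2) unfolding kspan_def by blast
    have "dot c' w = 0"
      using \<pi>(3) c' planeset_mem[OF w(1)] by blast
    then have "a * A + b * B = 0"
      by (simp add: ab A_def B_def dot_commute[of _ w] dot_lincomb)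
    then obtain k where "c' = smul k c"
      using lincomb_proportional AB ab c_def by blast
    then show "\<pi> = planeset c"
      using c' planeset_smul_if_nonzero by metis
  qed
  ultimately show ?thesis
    by blast
qed

lemma ex1_lineset_inter_planeset:
  fixes u v c :: "'a::field v4"
  assumes uv: "indep u v" and "\<not> lineset u v \<subseteq> planeset c"
  shows "\<exists>!P. P \<in> lineset u v \<and> P \<in> planeset c"
proof -
  define A where "A = dot c u"
  define B where "B = dot c v"
  have AB: "A \<noteq> 0 \<or> B \<noteq> 0"
    using assms(2) lineset_subset_planeset_iff[OF uv] unfolding A_def B_def by simp
  define x where "x = vadd (smul B u) (smul (- A) v)"
  have "x \<noteq> zero4"
    unfolding x_def using AB by (intro lincomb_neq_zero4[OF uv]) auto
  moreover have "dot c x = 0" "x \<in> kspan u v"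
    unfolding x_def kspan_def by (auto simp: dot_lincomb A_def B_def)
  ultimately have "pt x \<in> lineset u v \<and> pt x \<in> planeset c"
    using lineset_mem planeset_mem by blast
  moreover have "P = pt x" if P: "P \<in> lineset u v" "P \<in> planeset c" for P
  proof -
    obtain y where y: "y \<noteq> zero4" "P = pt y" "y \<in> kspan u v"
      using P(1) lineset_elem by blast
    then obtain a b where ab: "y = vadd (smul a u) (smul b v)"
      unfolding kspan_def by blast
    have "dot c y = 0"
      using P(2) y planeset_mem by blast
    then have "a * A + b * B = 0"
      by (simp add: ab A_def B_def dot_lincomb)
    then obtain k where "y = smul k x"
      using lincomb_proportional AB ab x_def by blast
    then show "P = pt x"
      using y pt_smul_if_nonzero by metis
  qed
  ultimately show ?thesis
    by blast
qed

section \<open>The twisted cubic, its osculating planes and the null polarity\<close>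

lemma cvec_neq_zero4: "cvec s \<noteq> (zero4::'a::field v4)"
  by (cases s) (auto simp: cvec_def v4_defs)

lemma inj_cpt: "inj (cpt :: 'a::field option \<Rightarrow> 'a v4 set)"
proof (rule injI)
  fix s t :: "'a option"
  assume "cpt s = cpt t"
  then obtain k where "cvec t = smul k (cvec s)"
    unfolding cpt_def pt_eq_iff by blast
  then show "s = t"
    by (cases s; cases t) (auto simp: cvec_def v4_defs)
qed

lemma card_Curve: "card (Curve :: 'a::{field,finite} v4 set set) = card (UNIV :: 'a set) + 1"
  unfolding Curve_def by (simp add: card_image[OF inj_cpt])

definition curve_params :: "'a::field v4 \<Rightarrow> 'a option set" where
  "curve_params c = {s. dot c (cvec s) = 0}"

lemma card_curve_params_le_3:
  fixes c :: "'a::{field,finite} v4"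
  assumes "c \<noteq> zero4"
  shows "card (curve_params c) \<le> 3"
proof -
  obtain c0 c1 c2 c3 where c: "c = (c0, c1, c2, c3)"
    by (rule prod_cases4)
  define p where "p = [:c3, c2, c1, c0:]"
  have "p \<noteq> 0"
    using assms by (auto simp: c p_def v4_defs)
  have "degree p \<le> (if c0 = 0 then 2 else 3)"
    by (simp add: p_def degree_pCons_eq_if)
  define N :: "'a option set" where "N = (if c0 = 0 then {None} else {})"
  define R where "R = Some ` {t. poly p t = 0}"
  have "curve_params c \<subseteq> N \<union> R"
  proof
    fix s assume "s \<in> curve_params c"
    then show "s \<in> N \<union> R"
      by (cases s) (auto simp: N_def R_def curve_params_def c p_def cvec_def v4_defs algebra_simps
          power2_eq_square power3_eq_cube)
  qed
  then have "card (curve_params c) \<le> card (N \<union> R)"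
    by (intro card_mono) simp_all
  also have "\<dots> \<le> card N + card R"
    by (rule card_Un_le)
  also have "\<dots> \<le> (if c0 = 0 then 1 else 0) + degree p"
    using card_poly_roots_bound[OF \<open>p \<noteq> 0\<close>] by (simp add: N_def R_def card_image)
  finally show ?thesis
    using \<open>degree p \<le> _\<close> by (simp split: if_splits)
qed

lemma planeset_inter_Curve: "planeset c \<inter> Curve = cpt ` curve_params c"
  unfolding Curve_def cpt_def curve_params_def using planeset_mem[OF cvec_neq_zero4] by blast

lemma card_planeset_inter_Curve_le_3:
  fixes c :: "'a::{field,finite} v4"
  assumes "c \<noteq> zero4"
  shows "card (planeset c \<inter> Curve) \<le> 3"
  using card_image_le[of "curve_params c" cpt] card_curve_params_le_3[OF assms]
  unfolding planeset_inter_Curve by simp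

definition polar_vec :: "'a::field v4 \<Rightarrow> 'a v4" where
  "polar_vec v = (case v of (x0, x1, x2, x3) \<Rightarrow> (x3, - 3 * x2, 3 * x1, - x0))"

lemma polarv_eq: "polarv v = planeset (polar_vec v)"
  by (cases v rule: prod_cases4) (simp add: polarv_def polar_vec_def)

lemma polar_vec_lincomb:
  "polar_vec (vadd (smul a u) (smul b v)) = vadd (smul a (polar_vec u)) (smul b (polar_vec (v::'a::field v4)))"
  by (cases u rule: prod_cases4; cases v rule: prod_cases4) (simp add: polar_vec_def v4_defs algebra_simps)

lemma dot_polar_vec_swap: "dot (polar_vec a) b = - dot (polar_vec b) (a::'a::field v4)"
  by (cases a rule: prod_cases4; cases b rule: prod_cases4) (simp add: polar_vec_def v4_defs algebra_simps)

lemma polar_vec_eq_zero4_iff: "(3::'a) \<noteq> 0 \<Longrightarrow> polar_vec x = zero4 \<longleftrightarrow> x = (zero4::'a::field v4)"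
  by (cases x rule: prod_cases4) (auto simp: polar_vec_def v4_defs)

lemma indep_polar_vec:
  assumes "(3::'a::field) \<noteq> 0" "indep u (v::'a v4)"
  shows "indep (polar_vec u) (polar_vec v)"
  using assms polar_vec_eq_zero4_iff[OF assms(1)] unfolding indep_def by (metis polar_vec_lincomb)

lemma oscp_eq_polar: "oscp s = planeset (polar_vec (cvec (s::'a::field option)))"
proof (cases s)
  case None
  have "polar_vec (cvec s) = smul (- 1) (0, 0, 0, 1)"
    using None by (simp add: polar_vec_def cvec_def v4_defs)
  then show ?thesis
    using None planeset_smul[of "- 1::'a" "(0, 0, 0, 1)"] by (simp add: oscp_def)
qed (simp add: oscp_def polar_vec_def cvec_def)

lemma mem_oscp_iff: "x \<noteq> zero4 \<Longrightarrow> pt x \<in> oscp s \<longleftrightarrow> s \<in> curve_params (polar_vec x)"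
  unfolding oscp_eq_polar curve_params_def by (simp add: planeset_mem dot_polar_vec_swap[of "cvec s"])

lemma cpt_mem_oscp_iff: "pt (cvec s) \<in> oscp t \<longleftrightarrow> s = (t::'a::field option)"
proof -
  have "dot (polar_vec (cvec t)) (cvec s) = 0 \<longleftrightarrow> s = t"
  proof (cases s; cases t)
    fix a b assume "s = Some a" "t = Some b"
    moreover have "a ^ 3 - 3 * b * a ^ 2 + 3 * b ^ 2 * a - b ^ 3 = (a - b) ^ 3"
      by (simp add: power2_eq_square power3_eq_cube algebra_simps)
    ultimately show ?thesis
      by (simp add: polar_vec_def cvec_def v4_defs algebra_simps)
  qed (simp_all add: polar_vec_def cvec_def v4_defs)
  then show ?thesis
    unfolding oscp_eq_polar by (simp add: planeset_mem cvec_neq_zero4)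
qed

lemma inj_oscp: "inj (oscp :: 'a::field option \<Rightarrow> 'a v4 set set)"
  by (rule injI) (metis cpt_mem_oscp_iff)

lemma card_GammaPlanes: "card (GammaPlanes :: 'a::{field,finite} v4 set set set) = card (UNIV :: 'a set) + 1"
  unfolding GammaPlanes_def by (simp add: card_image[OF inj_oscp])

lemma card_GammaPlanes_through: "card {\<gamma> \<in> GammaPlanes. P \<in> \<gamma>} = card {s. P \<in> oscp (s::'a::field option)}"
proof -
  have "{\<gamma> \<in> GammaPlanes. P \<in> \<gamma>} = oscp ` {s. P \<in> oscp s}"
    unfolding GammaPlanes_def by blast
  then show ?thesis
    using card_image[OF inj_on_subset[OF inj_oscp]] by simp
qed

section \<open>Points on tangents\<close>

lemma None_mem_curve_params_polar_vec:
  "None \<in> curve_params (polar_vec (x0, x1, x2, x3)) \<longleftrightarrow> x3 = (0::'a::field)"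
  by (simp add: curve_params_def polar_vec_def cvec_def v4_defs)

lemma Some_mem_curve_params_polar_vec:
  "Some t \<in> curve_params (polar_vec (x0, x1, x2, x3)) \<longleftrightarrow>
     x3 * t ^ 3 - 3 * x2 * t\<^sup>2 + 3 * x1 * t - x0 = (0::'a::field)"
  by (simp add: curve_params_def polar_vec_def cvec_def v4_defs algebra_simps)

lemma mem_tanp_None_iff:
  "(x0, x1, x2, x3) \<noteq> zero4 \<Longrightarrow> pt (x0, x1, x2, x3) \<in> tanp None \<longleftrightarrow> x2 = 0 \<and> x3 = (0::'a::field)"
  unfolding tanp_def by (auto simp: lineset_mem kspan_def v4_defs)

lemma mem_tanp_Some_iff:
  "x \<noteq> zero4 \<Longrightarrow> pt x \<in> tanp (Some r) \<longleftrightarrow>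
     (\<exists>a b. x = vadd (smul a (r ^ 3, r\<^sup>2, r, 1)) (smul b (3 * r\<^sup>2, 2 * r, 1, (0::'a::field))))"
  unfolding tanp_def by (simp add: lineset_mem kspan_def)

lemma curve_params_polar_vec_tanp_None:
  fixes x0 x1 :: "'a::field"
  assumes "(3::'a) \<noteq> 0" "x1 \<noteq> 0"
  shows "curve_params (polar_vec (x0, x1, 0, 0)) = {None, Some (x0 / (3 * x1))}"
proof (rule Set.set_eqI)
  fix s
  have "3 * x1 * t - x0 = 0 \<longleftrightarrow> t = x0 / (3 * x1)" for t
    using assms by (auto simp: field_simps)
  then show "s \<in> curve_params (polar_vec (x0, x1, 0, 0)) \<longleftrightarrow> s \<in> {None, Some (x0 / (3 * x1))}"
    by (cases s) (simp_all add: None_mem_curve_params_polar_vec Some_mem_curve_params_polar_vec)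
qed

lemma curve_params_polar_vec_tanp_Some:
  fixes a b r :: "'a::field"
  assumes "(3::'a) \<noteq> 0" "b \<noteq> 0"
  defines "x \<equiv> vadd (smul a (r ^ 3, r\<^sup>2, r, 1)) (smul b (3 * r\<^sup>2, 2 * r, 1, 0))"
  shows "curve_params (polar_vec x) = (if a = 0 then {None, Some r} else {Some r, Some (r + 3 * b / a)})"
proof (rule Set.set_eqI)
  fix s
  have "Some t \<in> curve_params (polar_vec x) \<longleftrightarrow> (t - r)\<^sup>2 * (a * (t - r) - 3 * b) = 0" for t
    by (simp add: x_def Some_mem_curve_params_polar_vec v4_defs power2_eq_square power3_eq_cube algebra_simps)
  also have "\<dots> t \<longleftrightarrow> t = r \<or> a * (t - r) = 3 * b" for t
    by simp
  also have "\<dots> t \<longleftrightarrow> t = r \<or> (a \<noteq> 0 \<and> t = r + 3 * b / a)" for t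
    using assms(1,2) by (cases "a = 0") (auto simp: field_simps)
  finally show "s \<in> curve_params (polar_vec x) \<longleftrightarrow>
      s \<in> (if a = 0 then {None, Some r} else {Some r, Some (r + 3 * b / a)})"
    by (cases s) (auto simp: x_def None_mem_curve_params_polar_vec v4_defs)
qed

lemma card_curve_params_polar_vec_if_tangent:
  fixes x :: "'a::field v4"
  assumes "(3::'a) \<noteq> 0" "x \<noteq> zero4" "pt x \<notin> Curve" "pt x \<in> tanp s"
  shows "card (curve_params (polar_vec x)) = 2"
proof (cases s)
  case None
  obtain x0 x1 where x: "x = (x0, x1, 0, 0)"
    using assms(2,4) None mem_tanp_None_iff by (metis prod_cases4)
  have "x1 \<noteq> 0"
  proof
    assume "x1 = 0"
    then have "x = smul x0 (cvec None)" "x0 \<noteq> 0"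
      using x assms(2) by (auto simp: cvec_def v4_defs)
    then show False
      using assms(3) pt_smul unfolding Curve_def cpt_def by (metis rangeI)
  qed
  then show ?thesis
    using curve_params_polar_vec_tanp_None[OF assms(1)] by (simp add: x)
next
  case (Some r)
  then obtain a b where x: "x = vadd (smul a (r ^ 3, r\<^sup>2, r, 1)) (smul b (3 * r\<^sup>2, 2 * r, 1, 0))"
    using assms(2,4) mem_tanp_Some_iff by blast
  have "b \<noteq> 0"
  proof
    assume "b = 0"
    then have "x = smul a (cvec (Some r))" "a \<noteq> 0"
      using x assms(2) by (auto simp: cvec_def v4_defs)
    then show False
      using assms(3) pt_smul unfolding Curve_def cpt_def by (metis rangeI)
  qed
  moreover have "r + 3 * b / a \<noteq> r" if "a \<noteq> 0"
    using assms(1) \<open>b \<noteq> 0\<close> that by simp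
  ultimately show ?thesis
    using curve_params_polar_vec_tanp_Some[OF assms(1)] by (simp add: x)
qed

lemma mem_tanp_if_double_root:
  fixes x0 x1 x2 x3 r :: "'a::field"
  assumes "(x0, x1, x2, x3) \<noteq> zero4"
    and "x3 * r ^ 3 - 3 * x2 * r\<^sup>2 + 3 * x1 * r - x0 = 0"
    and "x3 * r\<^sup>2 - 2 * x2 * r + x1 = 0"
  shows "pt (x0, x1, x2, x3) \<in> tanp (Some r)"
proof -
  have "x0 = x3 * r ^ 3 + (x2 - x3 * r) * (3 * r\<^sup>2)" "x1 = x3 * r\<^sup>2 + (x2 - x3 * r) * (2 * r)"
    using assms(2,3) by Groebner_Basis.algebra+
  then have "(x0, x1, x2, x3) = vadd (smul x3 (r ^ 3, r\<^sup>2, r, 1)) (smul (x2 - x3 * r) (3 * r\<^sup>2, 2 * r, 1, 0))"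
    by (simp add: v4_defs)
  then show ?thesis
    using assms(1) mem_tanp_Some_iff by blast
qed

lemma mem_tanp_if_curve_params_polar_vec_None:
  fixes x0 x1 x2 r :: "'a::field"
  assumes "(x0, x1, x2, 0) \<noteq> zero4" "curve_params (polar_vec (x0, x1, x2, 0)) = {None, Some r}"
  shows "\<exists>s. pt (x0, x1, x2, 0) \<in> tanp s"
proof (cases "x2 = 0")
  case True
  then show ?thesis
    using assms(1) mem_tanp_None_iff by blast
next
  case False
  let ?h = "\<lambda>t. - 3 * x2 * t\<^sup>2 + 3 * x1 * t - x0"
  have roots: "?h t = 0 \<longleftrightarrow> t = r" for t
    using Some_mem_curve_params_polar_vec[of t x0 x1 x2 0] unfolding assms(2) by simp
  \<comment> \<open>the other root of the quadratic \<open>?h\<close>, by Vieta\<close>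
  define r' where "r' = x1 / x2 - r"
  have "x2 * (r' + r) = x1"
    using False by (simp add: r'_def field_simps)
  then have "?h r' = ?h r"
    unfolding \<open>x2 * (r' + r) = x1\<close>[symmetric] by (simp add: algebra_simps power2_eq_square)
  then have "r' = r"
    using roots[of r] roots[of r'] by simp
  then have "0 * r\<^sup>2 - 2 * x2 * r + x1 = 0"
    using \<open>x2 * (r' + r) = x1\<close> by (simp add: algebra_simps)
  moreover have "0 * r ^ 3 - 3 * x2 * r\<^sup>2 + 3 * x1 * r - x0 = 0"
    using roots by simp
  ultimately show ?thesis
    using mem_tanp_if_double_root[OF assms(1)] by blast
qed

lemma mem_tanp_if_curve_params_polar_vec_Some:
  fixes x0 x1 x2 x3 r1 r2 :: "'a::field"
  assumes three: "(3::'a) \<noteq> 0" and "(x0, x1, x2, x3) \<noteq> zero4" "x3 \<noteq> 0" "r1 \<noteq> r2"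
    and "curve_params (polar_vec (x0, x1, x2, x3)) = {Some r1, Some r2}"
  shows "\<exists>s. pt (x0, x1, x2, x3) \<in> tanp s"
proof -
  let ?h = "\<lambda>t. x3 * t ^ 3 - 3 * x2 * t\<^sup>2 + 3 * x1 * t - x0"
  have roots: "?h t = 0 \<longleftrightarrow> t = r1 \<or> t = r2" for t
    using Some_mem_curve_params_polar_vec[of t x0 x1 x2 x3] unfolding assms(5) by simp
  have double: "x3 * r\<^sup>2 - 2 * x2 * r + x1 = 0"
    if "?h r = 0" "?h r' = 0" "r \<noteq> r'" "3 * x2 = x3 * (2 * r + r')" for r r'
    using that three by Groebner_Basis.algebra
  \<comment> \<open>the third root of the cubic \<open>?h\<close>, by Vieta\<close>
  define r3 where "r3 = 3 * x2 / x3 - r1 - r2"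
  have sum: "3 * x2 = x3 * (r1 + r2 + r3)"
    using assms(3) by (simp add: r3_def field_simps)
  have h1: "?h r1 = 0" and h2: "?h r2 = 0"
    using roots by blast+
  then have "?h r3 = 0"
    using sum assms(4) by Groebner_Basis.algebra
  then consider "r3 = r1" | "r3 = r2"
    using roots by blast
  then obtain r where "?h r = 0" "x3 * r\<^sup>2 - 2 * x2 * r + x1 = 0"
  proof cases
    case 1
    then have "3 * x2 = x3 * (2 * r1 + r2)"
      using sum by (simp add: algebra_simps)
    then show thesis
      by (rule that[OF h1 double[OF h1 h2 assms(4)]])
  next
    case 2
    then have "3 * x2 = x3 * (2 * r2 + r1)"
      using sum by (simp add: algebra_simps)
    then show thesis
      by (rule that[OF h2 double[OF h2 h1 assms(4)[symmetric]]])
  qed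
  then show ?thesis
    using mem_tanp_if_double_root[OF assms(2)] by blast
qed

lemma mem_tanp_if_card_curve_params_polar_vec:
  fixes x :: "'a::field v4"
  assumes "(3::'a) \<noteq> 0" "x \<noteq> zero4" "card (curve_params (polar_vec x)) = 2"
  shows "\<exists>s. pt x \<in> tanp s"
proof -
  obtain x0 x1 x2 x3 where x: "x = (x0, x1, x2, x3)"
    by (rule prod_cases4)
  obtain s1 s2 where S: "curve_params (polar_vec x) = {s1, s2}" "s1 \<noteq> s2"
    using assms(3) card_2_iff by metis
  show ?thesis
  proof (cases "x3 = 0")
    case True
    then have "None \<in> {s1, s2}"
      using S(1) None_mem_curve_params_polar_vec[of x0 x1 x2 x3] by (simp add: x)
    then obtain r where "curve_params (polar_vec x) = {None, Some r}"
      using S by (cases s1; cases s2) auto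
    then show ?thesis
      using mem_tanp_if_curve_params_polar_vec_None assms(2) True by (simp add: x)
  next
    case False
    then have "None \<notin> {s1, s2}"
      using S(1) None_mem_curve_params_polar_vec[of x0 x1 x2 x3] by (simp add: x)
    then obtain r1 r2 where "curve_params (polar_vec x) = {Some r1, Some r2}" "r1 \<noteq> r2"
      using S by (cases s1; cases s2) auto
    then show ?thesis
      using mem_tanp_if_curve_params_polar_vec_Some assms(1,2) False by (simp add: x)
  qed
qed

lemma mem_tanp_iff_card_osc_params:
  fixes x :: "'a::field v4"
  assumes "(3::'a) \<noteq> 0" "x \<noteq> zero4" "pt x \<notin> Curve"
  shows "(\<exists>s. pt x \<in> tanp s) \<longleftrightarrow> card {s. pt x \<in> oscp s} = 2"
proof -
  have "{s. pt x \<in> oscp s} = curve_params (polar_vec x)"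
    using mem_oscp_iff[OF assms(2)] by blast
  then show ?thesis
    using card_curve_params_polar_vec_if_tangent[OF assms] mem_tanp_if_card_curve_params_polar_vec[OF assms(1,2)]
    by auto
qed

section \<open>Counting incidences\<close>

lemma sum_card_incidences_swap:
  assumes "finite A" "finite B"
  shows "(\<Sum>a\<in>A. card {b\<in>B. R a b}) = (\<Sum>b\<in>B. card {a\<in>A. R a b})"
proof -
  have "(\<Sum>a\<in>A. card {b\<in>B. R a b}) = (\<Sum>a\<in>A. \<Sum>b\<in>B. of_bool (R a b))"
    using assms by (simp add: Int_def conj_commute)
  also have "\<dots> = (\<Sum>b\<in>B. \<Sum>a\<in>A. of_bool (R a b))"
    by (rule sum.swap)
  also have "\<dots> = (\<Sum>b\<in>B. card {a\<in>A. R a b})"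
    using assms by (simp add: Int_def conj_commute)
  finally show ?thesis .
qed

lemma sum_le_3_eq_level_cards:
  assumes "finite X" "\<And>x. x \<in> X \<Longrightarrow> f x \<le> (3::nat)"
  shows "(\<Sum>x\<in>X. f x) = card {x\<in>X. f x = 1} + 2 * card {x\<in>X. f x = 2} + 3 * card {x\<in>X. f x = 3}"
proof -
  have "(\<Sum>x\<in>X. f x) = (\<Sum>x\<in>X. of_bool (f x = 1) + 2 * of_bool (f x = 2) + 3 * of_bool (f x = 3))"
  proof (rule sum.cong)
    fix x assume "x \<in> X"
    then have "f x \<in> {0, 1, 2, 3}"
      using assms(2) by fastforce
    then show "f x = of_bool (f x = 1) + 2 * of_bool (f x = 2) + 3 * of_bool (f x = 3)"
      by auto
  qed simp
  also have "\<dots> = card {x\<in>X. f x = 1} + 2 * card {x\<in>X. f x = 2} + 3 * card {x\<in>X. f x = 3}"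
    using assms(1) by (simp add: sum.distrib sum_distrib_left[symmetric] Int_def conj_commute)
  finally show ?thesis .
qed

lemma weighted_incidence_count:
  assumes "finite X" "finite Y"
    and unique: "\<And>y. y \<in> Y \<Longrightarrow> \<exists>!x. x \<in> X \<and> R x y"
    and le_3: "\<And>x. x \<in> X \<Longrightarrow> card {y\<in>Y. R x y} \<le> 3"
  shows "card {x\<in>X. card {y\<in>Y. R x y} = 1} + 2 * card {x\<in>X. card {y\<in>Y. R x y} = 2}
    + 3 * card {x\<in>X. card {y\<in>Y. R x y} = 3} = card Y"
proof -
  have "card {x\<in>X. R x y} = 1" if y: "y \<in> Y" for y
  proof -
    obtain x where "x \<in> X" "R x y" "\<And>x'. x' \<in> X \<Longrightarrow> R x' y \<Longrightarrow> x' = x"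
      using unique[OF y] by blast
    then have "{x\<in>X. R x y} = {x}"
      by blast
    then show ?thesis
      by simp
  qed
  then have "(\<Sum>x\<in>X. card {y\<in>Y. R x y}) = card Y"
    using sum_card_incidences_swap[OF assms(1,2)] by simp
  then show ?thesis
    using sum_le_3_eq_level_cards[OF assms(1) le_3] by simp
qed

lemma plane_type_count:
  fixes l :: "'a::{field,finite} v4 set set"
  assumes "l \<in> Lines" and disj: "l \<inter> Curve = {}" and not_in_Gamma: "\<forall>\<gamma>\<in>GammaPlanes. \<not> l \<subseteq> \<gamma>"
  shows "PiN oneC_bar_planes l + 2 * PiN (dC_planes 2) l + 3 * PiN (dC_planes 3) l = card (UNIV :: 'a set) + 1"
proof -
  obtain u v where uv: "indep u v" and l: "l = lineset u v"
    using assms(1) unfolding Lines_def by blast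
  let ?X = "{\<pi> \<in> Planes. l \<subseteq> \<pi>}"
  have "\<exists>!\<pi>. \<pi> \<in> ?X \<and> P \<in> \<pi>" if P: "P \<in> Curve" for P
  proof -
    obtain s where s: "P = pt (cvec s)"
      using P unfolding Curve_def cpt_def by blast
    then have "cvec s \<notin> kspan u v"
      using disj P lineset_mem[OF cvec_neq_zero4] unfolding l by blast
    then show ?thesis
      using ex1_plane_through_line_and_point[OF uv cvec_neq_zero4] by (simp add: s l)
  qed
  moreover have "card {P\<in>Curve. P \<in> \<pi>} \<le> 3" if \<pi>: "\<pi> \<in> ?X" for \<pi>
  proof -
    obtain c where "c \<noteq> zero4" "\<pi> = planeset c"
      using \<pi> unfolding Planes_def by blast
    then show ?thesis
      using card_planeset_inter_Curve_le_3 by (simp add: Int_def conj_commute)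
  qed
  ultimately have "card {\<pi>\<in>?X. card {P\<in>Curve. P \<in> \<pi>} = 1} + 2 * card {\<pi>\<in>?X. card {P\<in>Curve. P \<in> \<pi>} = 2}
      + 3 * card {\<pi>\<in>?X. card {P\<in>Curve. P \<in> \<pi>} = 3} = card (Curve :: 'a v4 set set)"
    by (intro weighted_incidence_count) simp_all
  moreover have "{P\<in>Curve. P \<in> \<pi>} = \<pi> \<inter> Curve" for \<pi> :: "'a v4 set set"
    by blast
  moreover have "{\<pi>\<in>?X. card (\<pi> \<inter> Curve) = 1} = {\<pi> \<in> oneC_bar_planes. l \<subseteq> \<pi>}"
    using not_in_Gamma unfolding oneC_bar_planes_def by blast
  ultimately show ?thesis
    unfolding PiN_def dC_planes_def card_Curve by (simp add: conj_commute conj_left_commute)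
qed

lemma point_type_count:
  fixes l :: "'a::{field,finite} v4 set set"
  assumes three: "(3::'a) \<noteq> 0" and "l \<in> Lines"
    and disj: "l \<inter> Curve = {}" and not_in_Gamma: "\<forall>\<gamma>\<in>GammaPlanes. \<not> l \<subseteq> \<gamma>"
  shows "PN (muGamma_points 1) l + 2 * PN T_points l + 3 * PN (muGamma_points 3) l = card (UNIV :: 'a set) + 1"
proof -
  obtain u v where uv: "indep u v" and l: "l = lineset u v"
    using assms(2) unfolding Lines_def by blast
  let ?\<mu> = "\<lambda>P. card {\<gamma> \<in> GammaPlanes. P \<in> \<gamma>}"
  have "\<exists>!P. P \<in> l \<and> P \<in> \<gamma>" if \<gamma>: "\<gamma> \<in> GammaPlanes" for \<gamma>
  proof -
    obtain s where "\<gamma> = planeset (polar_vec (cvec s))"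
      using \<gamma> unfolding GammaPlanes_def oscp_eq_polar by blast
    then show ?thesis
      using ex1_lineset_inter_planeset[OF uv] not_in_Gamma \<gamma> by (simp add: l)
  qed
  moreover have on_line: "\<exists>x. x \<noteq> zero4 \<and> P = pt x \<and> P \<in> Points \<and> P \<notin> Curve" if P: "P \<in> l" for P
    using lineset_elem[of P u v] disj P unfolding Points_def l by blast
  moreover have "?\<mu> P \<le> 3" if P: "P \<in> l" for P
  proof -
    obtain x where "x \<noteq> zero4" "P = pt x"
      using on_line[OF P] by blast
    then show ?thesis
      using card_curve_params_le_3[of "polar_vec x"] polar_vec_eq_zero4_iff[OF three] mem_oscp_iff[of x]
      by (simp add: card_GammaPlanes_through)
  qed
  ultimately have "card {P\<in>l. ?\<mu> P = 1} + 2 * card {P\<in>l. ?\<mu> P = 2} + 3 * card {P\<in>l. ?\<mu> P = 3}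
      = card (GammaPlanes :: 'a v4 set set set)"
    by (intro weighted_incidence_count) simp_all
  moreover have "{P\<in>l. ?\<mu> P = 2} = {P \<in> T_points. P \<in> l}"
  proof (rule Set.set_eqI)
    fix P
    show "P \<in> {P\<in>l. ?\<mu> P = 2} \<longleftrightarrow> P \<in> {P \<in> T_points. P \<in> l}"
    proof (cases "P \<in> l")
      case True
      then obtain x where "x \<noteq> zero4" "P = pt x" "P \<in> Points" "P \<notin> Curve"
        using on_line by blast
      then show ?thesis
        using mem_tanp_iff_card_osc_params[OF three] unfolding T_points_def card_GammaPlanes_through by auto
    qed simp
  qed
  moreover have "{P\<in>l. ?\<mu> P = k} = {P \<in> muGamma_points k. P \<in> l}" for k
    using on_line unfolding muGamma_points_def by blast
  ultimately show ?thesis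
    unfolding PN_def card_GammaPlanes by simp
qed

section \<open>Polar lines\<close>

lemma planeset_inter_planeset:
  "planeset c \<inter> planeset d = {pt x | x. x \<noteq> zero4 \<and> x \<in> joint_kernel c (d::'a::field v4)}"
proof (rule Set.set_eqI)
  fix P
  show "P \<in> planeset c \<inter> planeset d \<longleftrightarrow> P \<in> {pt x | x. x \<noteq> zero4 \<and> x \<in> joint_kernel c d}"
  proof
    assume P: "P \<in> planeset c \<inter> planeset d"
    then obtain x where "x \<noteq> zero4" "P = pt x"
      unfolding planeset_def by blast
    then show "P \<in> {pt x | x. x \<noteq> zero4 \<and> x \<in> joint_kernel c d}"
      using P planeset_mem unfolding joint_kernel_def by blast
  next
    assume "P \<in> {pt x | x. x \<noteq> zero4 \<and> x \<in> joint_kernel c d}"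
    then obtain x where "x \<noteq> zero4" "P = pt x" "x \<in> joint_kernel c d"
      by blast
    then show "P \<in> planeset c \<inter> planeset d"
      using planeset_mem unfolding joint_kernel_def by blast
  qed
qed

lemma mem_joint_kernel_iff: "x \<in> joint_kernel c d \<longleftrightarrow> (\<forall>y\<in>kspan c d. dot y (x::'a::field v4) = 0)"
proof
  assume x: "x \<in> joint_kernel c d"
  show "\<forall>y\<in>kspan c d. dot y x = 0"
  proof
    fix y assume "y \<in> kspan c d"
    then obtain a b where "y = vadd (smul a c) (smul b d)"
      unfolding kspan_def by blast
    then show "dot y x = 0"
      using x by (simp add: joint_kernel_def dot_commute[of _ x] dot_lincomb)
  qed
next
  assume "\<forall>y\<in>kspan c d. dot y x = 0"
  then show "x \<in> joint_kernel c d"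
    unfolding joint_kernel_def using kspan_left kspan_right by blast
qed

lemma joint_kernel_cong:
  assumes "kspan c d = kspan c' d'"
  shows "joint_kernel c d = joint_kernel c' (d'::'a::field v4)"
proof (rule Set.set_eqI)
  fix x
  show "x \<in> joint_kernel c d \<longleftrightarrow> x \<in> joint_kernel c' d'"
    unfolding mem_joint_kernel_iff assms ..
qed

lemma polar_vec_mem_kspan:
  assumes "x \<in> kspan u v"
  shows "polar_vec x \<in> kspan (polar_vec u) (polar_vec (v::'a::field v4))"
proof -
  obtain a b where "x = vadd (smul a u) (smul b v)"
    using assms unfolding kspan_def by blast
  then have "polar_vec x = vadd (smul a (polar_vec u)) (smul b (polar_vec v))"
    by (simp add: polar_vec_lincomb)
  then show ?thesis
    unfolding kspan_def by blast
qed

lemma polar_line_lineset: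
  fixes u v :: "'a::field v4"
  assumes three: "(3::'a) \<noteq> 0" and uv: "indep u v"
  shows "polar_line (lineset u v) = {pt x | x. x \<noteq> zero4 \<and> x \<in> joint_kernel (polar_vec u) (polar_vec v)}"
  unfolding polar_line_def
proof (rule someI2_ex)
  have "u \<noteq> zero4" "v \<noteq> zero4" "pt u \<noteq> pt v"
    using indep_nonzero[OF uv] indep_iff_pt_neq uv by blast+
  moreover have "pt u \<in> lineset u v" "pt v \<in> lineset u v"
    using calculation(1,2) by (simp_all add: lineset_mem kspan_left kspan_right)
  ultimately show "\<exists>m u' w'. u' \<noteq> zero4 \<and> w' \<noteq> zero4 \<and> pt u' \<in> lineset u v \<and> pt w' \<in> lineset u v \<and>
      pt u' \<noteq> pt w' \<and> m = polarv u' \<inter> polarv w'"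
    by blast
next
  fix m
  assume "\<exists>u' w'. u' \<noteq> zero4 \<and> w' \<noteq> zero4 \<and> pt u' \<in> lineset u v \<and> pt w' \<in> lineset u v \<and>
      pt u' \<noteq> pt w' \<and> m = polarv u' \<inter> polarv w'"
  then obtain u' w' where nz: "u' \<noteq> zero4" "w' \<noteq> zero4" and "pt u' \<in> lineset u v" "pt w' \<in> lineset u v"
    and "pt u' \<noteq> pt w'" and m: "m = polarv u' \<inter> polarv w'"
    by blast
  then have "u' \<in> kspan u v" "w' \<in> kspan u v" "indep u' w'"
    by (simp_all add: lineset_mem indep_iff_pt_neq)
  then have same_span: "kspan (polar_vec u') (polar_vec w') = kspan (polar_vec u) (polar_vec v)"
    using kspan_eq[OF indep_polar_vec[OF three \<open>indep u' w'\<close>]]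
      polar_vec_mem_kspan by blast
  show "m = {pt x | x. x \<noteq> zero4 \<and> x \<in> joint_kernel (polar_vec u) (polar_vec v)}"
    unfolding m polarv_eq planeset_inter_planeset joint_kernel_cong[OF same_span] ..
qed

lemma polar_line_eq_lineset:
  fixes u v u' v' :: "'a::field v4"
  assumes "(3::'a) \<noteq> 0" "indep u v" "joint_kernel (polar_vec u) (polar_vec v) = kspan u' v'"
  shows "polar_line (lineset u v) = lineset u' v'"
  unfolding polar_line_lineset[OF assms(1,2)] assms(3) lineset_eq[of u' v'] ..

lemma joint_kernel_polar_vec_biduality:
  fixes u v :: "'a::field v4"
  assumes three: "(3::'a) \<noteq> 0" and uv: "indep u v"
  obtains u' v' where "indep u' v'" "joint_kernel (polar_vec u) (polar_vec v) = kspan u' v'"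
    "joint_kernel (polar_vec u') (polar_vec v') = kspan u v"
proof -
  obtain u' v' where uv': "indep u' v'" "joint_kernel (polar_vec u) (polar_vec v) = kspan u' v'"
    using joint_kernel_eq_kspan[OF indep_polar_vec[OF three uv]] by blast
  have "u' \<in> joint_kernel (polar_vec u) (polar_vec v)" "v' \<in> joint_kernel (polar_vec u) (polar_vec v)"
    using uv'(2) kspan_left kspan_right by blast+
  then have "u \<in> joint_kernel (polar_vec u') (polar_vec v')" "v \<in> joint_kernel (polar_vec u') (polar_vec v')"
    by (auto simp: joint_kernel_def dot_polar_vec_swap[of u'] dot_polar_vec_swap[of v'])
  then have "joint_kernel (polar_vec u') (polar_vec v') = kspan u v"
    using joint_kernel_eq_kspan_if_mem[OF indep_polar_vec[OF three uv'(1)] uv] by blast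
  then show ?thesis
    using that uv' by blast
qed

lemma cpt_mem_polar_line_iff:
  fixes u v u' v' :: "'a::field v4"
  assumes uv: "indep u v" and "joint_kernel (polar_vec u) (polar_vec v) = kspan u' v'"
  shows "pt (cvec s) \<in> lineset u' v' \<longleftrightarrow> lineset u v \<subseteq> oscp s"
proof -
  have "pt (cvec s) \<in> lineset u' v' \<longleftrightarrow> cvec s \<in> joint_kernel (polar_vec u) (polar_vec v)"
    using assms(2) lineset_mem[OF cvec_neq_zero4] by simp
  also have "\<dots> \<longleftrightarrow> dot (polar_vec (cvec s)) u = 0 \<and> dot (polar_vec (cvec s)) v = 0"
    by (auto simp: joint_kernel_def dot_polar_vec_swap[of "cvec s"])
  also have "\<dots> \<longleftrightarrow> lineset u v \<subseteq> oscp s"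
    unfolding oscp_eq_polar using lineset_subset_planeset_iff[OF uv] by blast
  finally show ?thesis .
qed

lemma polar_line_properties:
  fixes l :: "'a::field v4 set set"
  assumes three: "(3::'a) \<noteq> 0" and "l \<in> Lines"
    and disj: "l \<inter> Curve = {}" and not_in_Gamma: "\<forall>\<gamma>\<in>GammaPlanes. \<not> l \<subseteq> \<gamma>"
  shows "polar_line l \<in> Lines" "polar_line (polar_line l) = l"
    "polar_line l \<inter> Curve = {}" "\<forall>\<gamma>\<in>GammaPlanes. \<not> polar_line l \<subseteq> \<gamma>"
proof -
  obtain u v where uv: "indep u v" and l: "l = lineset u v"
    using assms(2) unfolding Lines_def by blast
  obtain u' v' where uv': "indep u' v'"
    and K: "joint_kernel (polar_vec u) (polar_vec v) = kspan u' v'"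
      "joint_kernel (polar_vec u') (polar_vec v') = kspan u v"
    using joint_kernel_polar_vec_biduality[OF three uv] by blast
  have polar_l: "polar_line (lineset u v) = lineset u' v'"
    by (rule polar_line_eq_lineset[OF three uv K(1)])
  then show "polar_line l \<in> Lines"
    using uv' unfolding l Lines_def by blast
  show "polar_line (polar_line l) = l"
    unfolding l polar_l by (rule polar_line_eq_lineset[OF three uv' K(2)])
  show "polar_line l \<inter> Curve = {}"
    using not_in_Gamma cpt_mem_polar_line_iff[OF uv K(1)]
    unfolding l polar_l Curve_def cpt_def GammaPlanes_def by blast
  show "\<forall>\<gamma>\<in>GammaPlanes. \<not> polar_line l \<subseteq> \<gamma>"
    using disj cpt_mem_polar_line_iff[OF uv' K(2)]
    unfolding l polar_l Curve_def cpt_def GammaPlanes_def by blast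
qed

lemma three_neq_zero_if_card_not_dvd:
  assumes "card (UNIV :: 'a::{field,finite} set) mod 3 \<noteq> 0"
  shows "(3::'a) \<noteq> 0"
proof
  assume "(3::'a) = 0"
  then have "CHAR('a) dvd 3"
    using of_nat_eq_0_iff_char_dvd[of 3, where 'a = 'a] by simp
  moreover have "CHAR('a) \<ge> 2"
    by (simp add: finite_imp_CHAR_pos prime_CHAR_semidom prime_ge_2_nat)
  ultimately have "CHAR('a) = 3"
    using dvd_imp_le[of "CHAR('a)" 3] by (cases "CHAR('a) = 2") auto
  then have "3 dvd card (UNIV :: 'a set)"
    using CHAR_dvd_CARD[where 'a = 'a] by metis
  then show False
    using assms by simp
qed

theorem lemma3p6:
  fixes emb :: "'a::{field,finite} \<Rightarrow> 'b::{field,finite}"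
    and l :: "'a v4 set set"
  assumes q5: "card (UNIV :: 'a set) \<ge> 5"
    and ext: "is_field_emb emb" "card (UNIV :: 'b set) = card (UNIV :: 'a set) ^ 2"
    and l: "l \<in> EnGammaLines emb"
  shows "PiN oneC_bar_planes l + 2 * PiN (dC_planes 2) l + 3 * PiN (dC_planes 3) l = card (UNIV :: 'a set) + 1
    \<and> (card (UNIV :: 'a set) mod 3 \<noteq> 0 \<longrightarrow>
         l = polar_line (polar_line l)
       \<and> PiN oneC_bar_planes (polar_line l) + 2 * PiN (dC_planes 2) (polar_line l)
           + 3 * PiN (dC_planes 3) (polar_line l) = card (UNIV :: 'a set) + 1
       \<and> PN (muGamma_points 1) l + 2 * PN T_points l + 3 * PN (muGamma_points 3) l = card (UNIV :: 'a set) + 1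
       \<and> PN (muGamma_points 1) (polar_line l) + 2 * PN T_points (polar_line l)
           + 3 * PN (muGamma_points 3) (polar_line l) = card (UNIV :: 'a set) + 1)"
proof -
  \<comment> \<open>only "a line missing the cubic and lying in no osculating plane" is used\<close>
  have line: "l \<in> Lines" "l \<inter> Curve = {}" "\<forall>\<gamma>\<in>GammaPlanes. \<not> l \<subseteq> \<gamma>"
    using l unfolding EnGammaLines_def by auto
  note three = three_neq_zero_if_card_not_dvd[where 'a = 'a]
  note polar = polar_line_properties[OF three line]
  show ?thesis
    using plane_type_count[OF line] point_type_count[OF three line]
      plane_type_count[OF polar(1,3,4)] point_type_count[OF three polar(1,3,4)] polar(2)
    by auto
qed

end
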